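(* For $n\in\{0,1,2,\dots\}$ let \[ e_n=-\frac{1}{(2n)!!}\sum_{k=0}^{n}\binom nk2^k\sum_{\ell=0}^{k}S(k,\ell)\frac{(2\ell-3)!!}{2^{\ell}},\qquad d_n=\frac{(-1)^n}{n!}\sum_{k=0}^{n}(-1)^kS(n,k)(2k-3)!!. \] Then, with the principal branch of the square root, \[ \sqrt{e^x(2-e^x)}=\sum_{n=0}^{\infty}e_nx^n,\qquad |x|<\ln2. \] Moreover, for $n\in\mathbb{N}$ define the $n\times n$ matrices $E^{(n)}=(E_{ij})$ and $F^{(n)}=(F_{ij})$, $1\le i,j\le n$, by $E_{ij}=e_{i-j+1}$ and $F_{ij}=(i-j+2)\,d_{i-j+2}$ for $j\le i+1$, and $E_{ij}=F_{ij}=0$ for $j\ge i+2$. (Thus $e_0=1$, $e_1=0$, $e_2=e_3=-\frac12$, and $d_1=1$, $2d_2=0$, $3d_3=4d_4=\frac12$.) Then for every $n\in\mathbb{N}$, \[ d_{n+1}=\frac{(-1)^n}{n+1}\det E^{(n)}\qquad\text{and}\qquad e_n=(-1)^n\det F^{(n)}. \]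
   Context: $S(n,k)$ are the Stirling numbers of the second kind, given by $\frac{(e^x-1)^k}{k!}=\sum_{n\ge k}S(n,k)\frac{x^n}{n!}$. Double factorials: $(2j)!!=2^jj!$ with $0!!=1$, $(2j-1)!!=1\cdot3\cdots(2j-1)$ for $j\ge1$, and $[-(2j+1)]!!=(-1)^j/(2j-1)!!$ for $j\ge0$, so $(-1)!!=1$ and $(-3)!!=-1$. *)

theory Defs
  imports Complex_Main "HOL-Combinatorics.Stirling" "Jordan_Normal_Form.Determinant"
begin

definition dfact_nat :: "nat \<Rightarrow> real" where
  "dfact_nat k = (\<Prod>i<(k+1) div 2. real (k - 2*i))"

(* double factorial on integers; for negative odd arguments
   [-(2j+1)]!! = (-1)^j / (2j-1)!!, with (-1)!! = 1.
   Negative even arguments never occur; they are set to 0. *)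
definition dfact :: "int \<Rightarrow> real" where
  "dfact m = (if m \<ge> 0 then dfact_nat (nat m)
              else if odd m then
                (let j = nat ((- m - 1) div 2) in
                   (-1)^j / (if j = 0 then 1 else dfact_nat (2*j - 1)))
              else 0)"

definition e_coef :: "nat \<Rightarrow> real" where
  "e_coef n = - (1 / dfact (2 * int n)) *
     (\<Sum>k=0..n. real (n choose k) * 2^k *
        (\<Sum>l=0..k. real (Stirling k l) * dfact (2 * int l - 3) / 2^l))"

definition d_coef :: "nat \<Rightarrow> real" where
  "d_coef n = (-1)^n / fact n *
     (\<Sum>k=0..n. (-1)^k * real (Stirling n k) * dfact (2 * int k - 3))"

(* E^(n), F^(n), 0-indexed: entry (i,j) corresponds to (i+1,j+1) in the paper *)
definition E_mat :: "nat \<Rightarrow> real mat" where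
  "E_mat n = mat n n (\<lambda>(i,j). if j \<le> i + 1 then e_coef (i + 1 - j) else 0)"

definition F_mat :: "nat \<Rightarrow> real mat" where
  "F_mat n = mat n n (\<lambda>(i,j). if j \<le> i + 1
                 then real (i + 2 - j) * d_coef (i + 2 - j) else 0)"

end

theory Submission
  imports Defs "HOL-Complex_Analysis.Complex_Analysis"
begin

(*
  Let S_c be the formal power series of sqrt(1 + c y), whose coefficients are c^l (1/2 choose l).
  Since (2l-3)!! = -(-2)^l l! (1/2 choose l) and the Stirling numbers are the coefficients of the
  powers of e^x - 1, the definitions of e_n and d_n say precisely that
     E(x) = sum e_n x^n = S_{-1}(e^x - 1) e^(x/2),     D(x) = sum d_n x^n = -S_2(e^(-x) - 1).
  These are formal square roots of e^x (2 - e^x) and 2 e^(-x) - 1 with constant terms 1 and -1,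
  so E = -e^x D, and differentiating D^2 = 2 e^(-x) - 1 gives E D' = 1.

  On |x| < ln 2 we have |e^x - 1| < 1, so Re(e^x (2 - e^x)) > 0 and the principal square root
  of e^x (2 - e^x) is holomorphic there; its Taylor series is a square root of the series of
  2 e^x - e^(2x) with constant term 1, hence equals E.

  If A B = 1 and A_0 = 1, the lower triangular Toeplitz matrix of A has determinant 1 and
  inverse the Toeplitz matrix of B; reading off the corner entry of the inverse as a cofactor
  shows that the Toeplitz-Hessenberg determinant det(A_{i-j+1}) of order n is (-1)^n B_n.
  Applied to (E, D') and (D', E) this gives the two determinant formulas.
*)

hide_const (open) Determinants.det Finite_Cartesian_Product.mat
no_notation Finite_Cartesian_Product.vec_nth (infixl "$" 90) and Matrix.vec_index (infixl "$" 100)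

section \<open>Double factorials\<close>

lemma dfact_nat_add2: "dfact_nat (k + 2) = real (k + 2) * dfact_nat k"
proof -
  have "dfact_nat (k + 2) = (\<Prod>i<Suc ((k + 1) div 2). real (k + 2 - 2 * i))"
    by (simp add: dfact_nat_def)
  also have "\<dots> = real (k + 2) * (\<Prod>i<(k + 1) div 2. real (k + 2 - 2 * Suc i))"
    by (subst prod.lessThan_Suc_shift) simp
  also have "(\<Prod>i<(k + 1) div 2. real (k + 2 - 2 * Suc i)) = dfact_nat k"
    unfolding dfact_nat_def by (intro prod.cong) auto
  finally show ?thesis .
qed

lemma dfact_nat_even: "dfact_nat (2 * n) = 2 ^ n * fact n"
proof (induction n)
  case (Suc n)
  have "dfact_nat (2 * Suc n) = real (2 * n + 2) * dfact_nat (2 * n)"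
    using dfact_nat_add2[of "2 * n"] by simp
  with Suc show ?case by simp
qed (simp add: dfact_nat_def)

lemma dfact_of_nat: "dfact (int k) = dfact_nat k"
  by (simp add: dfact_def)

lemma dfact_even: "dfact (2 * int n) = 2 ^ n * fact n"
  using dfact_of_nat[of "2 * n"] by (simp add: dfact_nat_even)

lemma dfact_odd_rec: "dfact (2 * int k - 1) = (2 * real k - 1) * dfact (2 * int k - 3)"
proof -
  consider "k = 0" | "k = 1" | m where "k = m + 2"
    by (metis One_nat_def add_2_eq_Suc' not0_implies_Suc)
  then show ?thesis
  proof cases
    case 3
    then have shift: "2 * int k - 1 = int (2 * m + 1 + 2)" "2 * int k - 3 = int (2 * m + 1)"
      by auto
    show ?thesis
      unfolding shift dfact_of_nat dfact_nat_add2 using 3 by simp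
  qed (simp_all add: dfact_def dfact_nat_def)
qed

lemma dfact_odd_eq_gchoose: "dfact (2 * int l - 3) = - ((-2) ^ l * fact l * ((1/2 :: real) gchoose l))"
proof (induction l)
  case (Suc l)
  have shift: "2 * int (Suc l) - 3 = 2 * int l - 1"
    by simp
  have "dfact (2 * int (Suc l) - 3)
          = - ((-2) ^ Suc l * fact l * ((1/2 - of_nat l) * ((1/2) gchoose l)))"
    unfolding shift dfact_odd_rec Suc.IH by (simp add: field_simps)
  also have "(1/2 - of_nat l) * ((1/2 :: real) gchoose l) = of_nat (Suc l) * ((1/2) gchoose Suc l)"
    using gbinomial_mult_1[of "1/2 :: real" l] by (simp add: algebra_simps)
  finally show ?case
    by (simp add: algebra_simps)
qed (simp add: dfact_def dfact_nat_def)

section \<open>The formal square root of $1 + c y$\<close>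

definition fps_sqrt_one_plus :: "'a::field_char_0 \<Rightarrow> 'a fps" where
  "fps_sqrt_one_plus c = Abs_fps (\<lambda>n. c ^ n * ((1/2) gchoose n))"

lemma fps_sqrt_one_plus_nth_0 [simp]: "fps_sqrt_one_plus c $ 0 = 1"
  by (simp add: fps_sqrt_one_plus_def)

lemma fps_sqrt_one_plus_square:
  "fps_sqrt_one_plus c * fps_sqrt_one_plus c = 1 + fps_const c * fps_X"
proof (rule fps_ext)
  fix n
  have "(fps_sqrt_one_plus c * fps_sqrt_one_plus c) $ n
          = c ^ n * (\<Sum>i=0..n. ((1/2) gchoose i) * ((1/2) gchoose (n - i)))"
    unfolding fps_mult_nth fps_sqrt_one_plus_def sum_distrib_left
    by (intro sum.cong) (auto simp: power_add[symmetric])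
  also have "\<dots> = c ^ n * (1 gchoose n)"
    by (simp add: gbinomial_Vandermonde)
  also have "(1 :: 'a) gchoose n = of_nat (1 choose n)"
    by (metis binomial_gbinomial of_nat_1)
  finally show "(fps_sqrt_one_plus c * fps_sqrt_one_plus c) $ n = (1 + fps_const c * fps_X) $ n"
    by (cases n) (auto simp: binomial_eq_0)
qed

lemma fps_sqrt_one_plus_compose_square:
  fixes b :: "'a::field_char_0 fps"
  assumes "b $ 0 = 0"
  shows "(fps_sqrt_one_plus c oo b) * (fps_sqrt_one_plus c oo b) = 1 + fps_const c * b"
  using assms
  by (simp add: fps_compose_mult_distrib[symmetric] fps_sqrt_one_plus_square
      fps_compose_add_distrib fps_const_mult_apply_left[symmetric])

lemma fps_sqrt_one_plus_nth_dfact: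
  "fps_sqrt_one_plus c $ l = - ((- c / 2) ^ l * dfact (2 * int l - 3) / fact l)"
  unfolding fps_sqrt_one_plus_def dfact_odd_eq_gchoose
  by (simp add: field_simps power_mult_distrib[symmetric])

lemma fps_square_eq_imp_eq:
  fixes u v :: "'a::field_char_0 fps"
  assumes "u * u = v * v" "u $ 0 = v $ 0" "v $ 0 \<noteq> 0"
  shows "u = v"
proof -
  have "(u + v) $ 0 \<noteq> 0"
    using assms(2,3) by simp
  then have "u + v \<noteq> 0"
    by (metis fps_zero_nth)
  moreover have "(u - v) * (u + v) = 0"
    using assms(1) by (simp add: algebra_simps)
  ultimately show ?thesis
    by simp
qed

section \<open>Stirling numbers as coefficients of powers of $e^{a y} - 1$\<close>

lemma fps_exp_minus_one_nth_0: "(fps_exp a - 1) $ 0 = (0 :: 'a::field_char_0)"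
  by simp

lemma fps_nth_power_exp_minus_one:
  fixes a :: "'a::field_char_0"
  shows "((fps_exp a - 1) ^ l) $ k = fact l * of_nat (Stirling k l) * a ^ k / fact k"
proof (induction k arbitrary: l)
  case 0
  show ?case
    by (cases l) (simp_all add: fps_nth_power_0)
next
  case (Suc k)
  show ?case
  proof (cases l)
    case (Suc m)
    let ?Y = "fps_exp a - 1"
    \<comment> \<open>Differentiating \<open>?Y ^ Suc m\<close> reproduces the recurrence of the Stirling numbers.\<close>
    have "fps_deriv (?Y ^ Suc m) = fps_const (of_nat (Suc m) * a) * (?Y ^ Suc m + ?Y ^ m)"
      unfolding fps_deriv_power
      by (simp add: algebra_simps fps_const_mult[symmetric] del: fps_const_mult)
    then have "of_nat (Suc k) * (?Y ^ Suc m) $ Suc k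
                 = of_nat (Suc m) * a * ((?Y ^ Suc m) $ k + (?Y ^ m) $ k)"
      using fps_deriv_nth[of "?Y ^ Suc m" k] by (simp add: mult.commute del: power_Suc)
    also have "\<dots> = of_nat (Suc m) * a * (fact (Suc m) * of_nat (Stirling k (Suc m)) * a ^ k / fact k
                                        + fact m * of_nat (Stirling k m) * a ^ k / fact k)"
      by (simp only: Suc.IH)
    also have "\<dots> = of_nat (Suc k) * (fact (Suc m) * of_nat (Stirling (Suc k) (Suc m)) * a ^ Suc k
                      / fact (Suc k))"
    proof -
      have "of_nat (Stirling (Suc k) (Suc m))
              = of_nat (Suc m) * of_nat (Stirling k (Suc m)) + (of_nat (Stirling k m) :: 'a)"
        by (simp add: algebra_simps)
      moreover have "fact (Suc m) = of_nat (Suc m) * (fact m :: 'a)"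
        and "fact (Suc k) = of_nat (Suc k) * (fact k :: 'a)"
        by simp_all
      ultimately show ?thesis
        by (simp add: field_simps del: of_nat_Suc fact_Suc)
    qed
    finally show ?thesis
      unfolding \<open>l = Suc m\<close> by (subst (asm) mult_left_cancel) (simp_all del: of_nat_Suc)
  qed simp
qed

lemma fps_sqrt_one_plus_compose_exp_nth:
  "(fps_sqrt_one_plus c oo (fps_exp a - 1)) $ k
     = - (a ^ k / fact k * (\<Sum>l=0..k. (- c / 2) ^ l * real (Stirling k l) * dfact (2 * int l - 3)))"
  unfolding fps_compose_nth fps_sqrt_one_plus_nth_dfact fps_nth_power_exp_minus_one
    sum_distrib_left sum_negf[symmetric]
  by (intro sum.cong) (auto simp: field_simps)

section \<open>The generating functions of $e_n$ and $d_n$\<close>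

definition e_fps :: "real fps" where
  "e_fps = (fps_sqrt_one_plus (-1) oo (fps_exp 1 - 1)) * fps_exp (1/2)"

definition d_fps :: "real fps" where
  "d_fps = - (fps_sqrt_one_plus 2 oo (fps_exp (-1) - 1))"

lemma d_coef_eq_fps_nth: "d_coef n = d_fps $ n"
  unfolding d_fps_def d_coef_def fps_neg_nth fps_sqrt_one_plus_compose_exp_nth
  by simp

lemma e_coef_eq_fps_nth: "e_coef n = e_fps $ n"
proof -
  define s where "s k = (\<Sum>l=0..k. real (Stirling k l) * dfact (2 * int l - 3) / 2 ^ l)" for k
  have inner: "(fps_sqrt_one_plus (-1) oo (fps_exp 1 - 1)) $ k = - s k / fact k" for k
  proof -
    have "(\<Sum>l=0..k. (- (-1) / 2) ^ l * real (Stirling k l) * dfact (2 * int l - 3)) = s k"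
      unfolding s_def by (intro sum.cong) (simp_all add: power_one_over)
    then show ?thesis
      by (simp add: fps_sqrt_one_plus_compose_exp_nth)
  qed
  have weight: "real (n choose k) * 2 ^ k / (2 ^ n * fact n) = (1/2) ^ (n - k) / fact (n - k) / fact k"
    if "k \<le> n" for k
  proof -
    have "real (n choose k) = fact n / (fact k * fact (n - k))"
      using that by (rule binomial_fact)
    moreover have "(2 :: real) ^ n = 2 ^ k * 2 ^ (n - k)"
      using that by (simp add: power_add[symmetric])
    ultimately show ?thesis
      by (simp add: field_simps power_one_over)
  qed
  have "e_fps $ n = (\<Sum>k=0..n. - s k / fact k * ((1/2) ^ (n - k) / fact (n - k)))"
    unfolding e_fps_def fps_mult_nth inner by simp
  also have "\<dots> = - (\<Sum>k=0..n. real (n choose k) * 2 ^ k / (2 ^ n * fact n) * s k)"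
    unfolding sum_negf[symmetric]
  proof (intro sum.cong refl)
    fix k assume "k \<in> {0..n}"
    then have w: "real (n choose k) * 2 ^ k / (2 ^ n * fact n) = (1/2) ^ (n - k) / fact (n - k) / fact k"
      by (intro weight) simp
    show "- s k / fact k * ((1/2) ^ (n - k) / fact (n - k))
            = - (real (n choose k) * 2 ^ k / (2 ^ n * fact n) * s k)"
      unfolding w by (simp add: field_simps)
  qed
  also have "\<dots> = e_coef n"
    unfolding e_coef_def dfact_even s_def sum_distrib_left by (simp add: sum_negf field_simps)
  finally show ?thesis ..
qed

lemma e_fps_nth_0: "e_fps $ 0 = 1"
  by (simp add: e_fps_def)

lemma d_fps_nth_0: "d_fps $ 0 = -1"
  by (simp add: d_fps_def)

lemma e_fps_square: "e_fps * e_fps = 2 * fps_exp 1 - fps_exp 2"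
proof -
  let ?S = "fps_sqrt_one_plus (-1) oo (fps_exp 1 - 1)"
  have "e_fps * e_fps = (?S * ?S) * (fps_exp (1/2) * fps_exp (1/2))"
    unfolding e_fps_def by (simp add: algebra_simps)
  also have "\<dots> = (2 - fps_exp 1) * fps_exp 1"
    unfolding fps_sqrt_one_plus_compose_square[OF fps_exp_minus_one_nth_0] fps_exp_add_mult[symmetric]
    by (simp add: fps_const_neg[symmetric] algebra_simps del: fps_const_neg)
  finally show ?thesis
    by (simp add: algebra_simps fps_exp_add_mult[symmetric])
qed

lemma d_fps_square: "d_fps * d_fps = 2 * fps_exp (-1) - 1"
proof -
  have "d_fps * d_fps = 1 + fps_const 2 * (fps_exp (-1) - 1)"
    unfolding d_fps_def fps_sqrt_one_plus_compose_square[OF fps_exp_minus_one_nth_0, symmetric]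
    by simp
  then show ?thesis
    by (simp add: numeral_fps_const[symmetric] algebra_simps)
qed

lemma e_fps_eq: "e_fps = - (fps_exp 1 * d_fps)"
proof (rule fps_square_eq_imp_eq)
  have "(fps_exp 1 * d_fps) * (fps_exp 1 * d_fps) = (fps_exp 1 * fps_exp 1) * (d_fps * d_fps)"
    by (simp add: algebra_simps)
  also have "\<dots> = 2 * fps_exp 1 - fps_exp 2"
    unfolding d_fps_square by (simp add: algebra_simps fps_exp_add_mult[symmetric])
  finally show "e_fps * e_fps = - (fps_exp 1 * d_fps) * - (fps_exp 1 * d_fps)"
    by (simp add: e_fps_square)
qed (simp_all add: e_fps_nth_0 d_fps_nth_0)

lemma e_fps_mult_deriv_d_fps: "e_fps * fps_deriv d_fps = 1"
proof -
  have "fps_const 2 * (d_fps * fps_deriv d_fps) = fps_deriv (d_fps * d_fps)"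
    by (simp add: algebra_simps numeral_fps_const[symmetric] mult_2)
  also have "\<dots> = fps_const 2 * - fps_exp (-1)"
    unfolding d_fps_square by (simp add: numeral_fps_const fps_const_neg[symmetric] del: fps_const_neg)
  finally have d_deriv: "d_fps * fps_deriv d_fps = - fps_exp (-1)"
    by (subst (asm) mult_left_cancel) simp_all
  have "e_fps * fps_deriv d_fps = - (fps_exp 1 * (d_fps * fps_deriv d_fps))"
    unfolding e_fps_eq by (simp add: algebra_simps)
  also have "\<dots> = fps_exp 1 * fps_exp (-1)"
    by (simp add: d_deriv)
  finally show ?thesis
    by (simp add: fps_exp_add_mult[symmetric])
qed

lemma deriv_d_fps_nth_0: "fps_deriv d_fps $ 0 = 1"
  using arg_cong[where f = "\<lambda>A. fps_nth A 0", OF e_fps_mult_deriv_d_fps] by (simp add: e_fps_nth_0)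

section \<open>Toeplitz--Hessenberg determinants\<close>

definition lower_toeplitz_mat :: "nat \<Rightarrow> 'a::comm_ring_1 fps \<Rightarrow> 'a mat" where
  "lower_toeplitz_mat n A = mat n n (\<lambda>(i, j). if j \<le> i then A $ (i - j) else 0)"

definition hessenberg_toeplitz_mat :: "nat \<Rightarrow> 'a::comm_ring_1 fps \<Rightarrow> 'a mat" where
  "hessenberg_toeplitz_mat n A = mat n n (\<lambda>(i, j). if j \<le> i + 1 then A $ (i + 1 - j) else 0)"

lemma lower_toeplitz_mat_carrier: "lower_toeplitz_mat n A \<in> carrier_mat n n"
  by (simp add: lower_toeplitz_mat_def)

lemma lower_toeplitz_mat_mult:
  "lower_toeplitz_mat n A * lower_toeplitz_mat n B = lower_toeplitz_mat n (A * B)"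
proof (rule eq_matI)
  fix i j assume "i < dim_row (lower_toeplitz_mat n (A * B))" "j < dim_col (lower_toeplitz_mat n (A * B))"
  then have ij: "i < n" "j < n"
    by (simp_all add: lower_toeplitz_mat_def)
  let ?f = "\<lambda>k. (if k \<le> i then A $ (i - k) else 0) * (if j \<le> k then B $ (k - j) else 0)"
  have "(lower_toeplitz_mat n A * lower_toeplitz_mat n B) $$ (i, j) = (\<Sum>k = 0..<n. ?f k)"
    using ij by (simp add: lower_toeplitz_mat_def scalar_prod_def)
  also have "\<dots> = (if j \<le> i then (A * B) $ (i - j) else 0)"
  proof (cases "j \<le> i")
    case True
    have "(\<Sum>k = 0..<n. ?f k) = (\<Sum>k = j..i. A $ (i - k) * B $ (k - j))"
      by (rule sum.mono_neutral_cong_right) (use ij in auto)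
    also have "\<dots> = (\<Sum>m = 0..i - j. A $ m * B $ (i - j - m))"
      by (rule sum.reindex_bij_witness[of _ "\<lambda>m. i - m" "\<lambda>k. i - k"]) (use True in auto)
    also have "\<dots> = (A * B) $ (i - j)"
      by (simp add: fps_mult_nth)
    finally show ?thesis
      using True by simp
  qed (auto intro!: sum.neutral)
  finally show "(lower_toeplitz_mat n A * lower_toeplitz_mat n B) $$ (i, j)
                  = lower_toeplitz_mat n (A * B) $$ (i, j)"
    using ij by (simp add: lower_toeplitz_mat_def)
qed (simp_all add: lower_toeplitz_mat_def)

lemma lower_toeplitz_mat_1: "lower_toeplitz_mat n 1 = 1\<^sub>m n"
  by (rule eq_matI) (auto simp: lower_toeplitz_mat_def)

lemma det_lower_toeplitz_mat: "det (lower_toeplitz_mat n A) = (A $ 0) ^ n"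
proof -
  have "det (lower_toeplitz_mat n A) = prod_list (diag_mat (lower_toeplitz_mat n A))"
    by (rule det_lower_triangular[OF _ lower_toeplitz_mat_carrier]) (simp add: lower_toeplitz_mat_def)
  also have "diag_mat (lower_toeplitz_mat n A) = replicate n (A $ 0)"
    by (rule nth_equalityI) (simp_all add: diag_mat_def lower_toeplitz_mat_def)
  finally show ?thesis
    by simp
qed

lemma mat_delete_lower_toeplitz_mat:
  "mat_delete (lower_toeplitz_mat (Suc n) A) 0 n = hessenberg_toeplitz_mat n A"
  by (rule eq_matI) (auto simp: mat_delete_def lower_toeplitz_mat_def hessenberg_toeplitz_mat_def)

lemma det_hessenberg_toeplitz_mat:
  fixes A B :: "'a::comm_ring_1 fps"
  assumes AB: "A * B = 1" and A0: "A $ 0 = 1"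
  shows "det (hessenberg_toeplitz_mat n A) = (-1) ^ n * B $ n"
proof -
  let ?T = "lower_toeplitz_mat (Suc n) A" and ?U = "lower_toeplitz_mat (Suc n) B"
  have T: "?T \<in> carrier_mat (Suc n) (Suc n)" and U: "?U \<in> carrier_mat (Suc n) (Suc n)"
    by (simp_all add: lower_toeplitz_mat_carrier)
  have TU: "?T * ?U = 1\<^sub>m (Suc n)"
    by (simp add: lower_toeplitz_mat_mult AB lower_toeplitz_mat_1)
  have adj: "adj_mat ?T = ?U"
  proof -
    have adjT: "adj_mat ?T \<in> carrier_mat (Suc n) (Suc n)"
      using adj_mat(1)[OF T] .
    then have "adj_mat ?T = adj_mat ?T * (?T * ?U)"
      by (simp add: TU)
    also have "\<dots> = (adj_mat ?T * ?T) * ?U"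
      using adjT T U by (simp add: assoc_mult_mat)
    also have "(1 :: 'a) \<cdot>\<^sub>m 1\<^sub>m (Suc n) = 1\<^sub>m (Suc n)"
      by (rule eq_matI) auto
    then have "(adj_mat ?T * ?T) * ?U = ?U"
      using U by (simp add: adj_mat(3)[OF T] det_lower_toeplitz_mat A0)
    finally show ?thesis .
  qed
  have "B $ n = adj_mat ?T $$ (n, 0)"
    unfolding adj by (simp add: lower_toeplitz_mat_def)
  also have "\<dots> = cofactor ?T 0 n"
    by (simp add: adj_mat_def lower_toeplitz_mat_def)
  also have "\<dots> = (-1) ^ n * det (hessenberg_toeplitz_mat n A)"
    by (simp add: cofactor_def mat_delete_lower_toeplitz_mat)
  finally show ?thesis
    by (simp add: power_mult_distrib[symmetric])
qed

lemma E_mat_eq: "E_mat n = hessenberg_toeplitz_mat n e_fps"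
  unfolding E_mat_def hessenberg_toeplitz_mat_def e_coef_eq_fps_nth ..

lemma F_mat_eq: "F_mat n = hessenberg_toeplitz_mat n (fps_deriv d_fps)"
  unfolding F_mat_def hessenberg_toeplitz_mat_def
  by (intro arg_cong[where f = "mat n n"]) (auto simp: fun_eq_iff d_coef_eq_fps_nth Suc_diff_le)

section \<open>The power series of $\sqrt{e^z (2 - e^z)}$\<close>

lemma norm_exp_minus_one_le:
  fixes z :: complex
  shows "norm (exp z - 1) \<le> exp (norm z) - 1"
proof -
  have s1: "(\<lambda>n. z ^ Suc n /\<^sub>R fact (Suc n)) sums (exp z - 1)"
    using exp_converges[of z] by (subst sums_Suc_iff) simp
  have s2: "(\<lambda>n. norm z ^ Suc n /\<^sub>R fact (Suc n)) sums (exp (norm z) - 1)"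
    using exp_converges[of "norm z"] by (subst sums_Suc_iff) simp
  have "norm (exp z - 1) = norm (suminf (\<lambda>n. z ^ Suc n /\<^sub>R fact (Suc n)))"
    using s1 by (simp add: sums_iff)
  also have "\<dots> \<le> suminf (\<lambda>n. norm z ^ Suc n /\<^sub>R fact (Suc n))"
    by (rule norm_suminf_le) (use s2 in \<open>auto simp: sums_iff norm_power norm_mult\<close>)
  also have "\<dots> = exp (norm z) - 1"
    using s2 by (simp add: sums_iff)
  finally show ?thesis .
qed

lemma Re_exp_mult_2_minus_exp_pos:
  fixes z :: complex
  assumes "norm z < ln 2"
  shows "Re (exp z * (2 - exp z)) > 0"
proof -
  have "exp (norm z) < 2"
    using assms by (metis exp_less_cancel_iff exp_ln zero_less_numeral)
  then have w: "norm (exp z - 1) < 1"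
    using norm_exp_minus_one_le[of z] by linarith
  have "Re ((exp z - 1) ^ 2) \<le> norm (exp z - 1) ^ 2"
    using complex_Re_le_cmod[of "(exp z - 1) ^ 2"] by (simp add: norm_power)
  also have "\<dots> < 1"
    using w by (simp add: power_less_one_iff)
  finally show ?thesis
    by (simp add: algebra_simps power2_eq_square)
qed

lemma holomorphic_square_root_sums:
  fixes f :: "complex \<Rightarrow> complex" and F :: "complex fps"
  assumes holo: "f holomorphic_on ball 0 r"
    and square: "(\<lambda>z. f z * f z) has_fps_expansion F * F"
    and F0: "F $ 0 = f 0" "f 0 \<noteq> 0"
    and z: "norm z < r"
  shows "(\<lambda>n. F $ n * z ^ n) sums f z"
proof -
  have "0 < r"
    using z norm_ge_zero[of z] by linarith
  then have hf: "f has_fps_expansion fps_expansion f 0"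
    by (intro has_fps_expansion_fps_expansion[OF open_ball _ holo]) simp
  have "fps_expansion f 0 = F"
  proof (rule fps_square_eq_imp_eq)
    show "fps_expansion f 0 * fps_expansion f 0 = F * F"
      using has_fps_expansion_mult[OF hf hf] square by (rule fps_expansion_unique_complex)
  qed (use F0 in \<open>simp_all add: fps_expansion_def\<close>)
  then have "(deriv ^^ n) f 0 / fact n = F $ n" for n
    using fps_nth_fps_expansion[OF hf, of n] by simp
  then show ?thesis
    using holomorphic_power_series[OF holo, of z] z by simp
qed

lemma e_coef_sums:
  fixes z :: complex
  assumes z: "norm z < ln 2"
  shows "(\<lambda>n. complex_of_real (e_coef n) * z ^ n) sums csqrt (exp z * (2 - exp z))"
proof -
  define f where "f w = csqrt (exp w * (2 - exp w))" for w :: complex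
  define F where "F = Abs_fps (\<lambda>n. complex_of_real (e_coef n))"
  have holo: "f holomorphic_on ball 0 (ln 2)"
    unfolding f_def
  proof (intro holomorphic_on_csqrt' holomorphic_intros)
    fix w :: complex assume "w \<in> ball 0 (ln 2)"
    then have "Re (exp w * (2 - exp w)) > 0"
      by (intro Re_exp_mult_2_minus_exp_pos) simp
    then show "exp w * (2 - exp w) \<notin> \<real>\<^sub>\<le>\<^sub>0"
      by (auto simp: complex_nonpos_Reals_iff)
  qed
  have "(\<lambda>w :: complex. 2 * exp (1 * w) - exp (2 * w)) has_fps_expansion fps_const 2 * fps_exp 1 - fps_exp 2"
    by (intro has_fps_expansion_diff has_fps_expansion_cmult_left has_fps_expansion_exp)
  moreover have "(\<lambda>w. f w * f w) = (\<lambda>w. 2 * exp (1 * w) - exp (2 * w))"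
    using power2_csqrt
    by (simp add: fun_eq_iff f_def power2_eq_square algebra_simps mult_exp_exp)
  moreover have "F * F = fps_const 2 * fps_exp 1 - fps_exp 2"
  proof (rule fps_ext)
    fix n
    have "(F * F) $ n = complex_of_real ((e_fps * e_fps) $ n)"
      by (simp add: F_def fps_mult_nth e_coef_eq_fps_nth)
    then show "(F * F) $ n = (fps_const 2 * fps_exp 1 - fps_exp 2) $ n"
      unfolding e_fps_square by (simp add: numeral_fps_const)
  qed
  ultimately have "(\<lambda>w. f w * f w) has_fps_expansion F * F"
    by simp
  moreover have "F $ 0 = f 0" and "f 0 \<noteq> 0"
    by (simp_all add: F_def f_def e_coef_eq_fps_nth e_fps_nth_0)
  ultimately have "(\<lambda>n. F $ n * z ^ n) sums f z"
    using holomorphic_square_root_sums[OF holo _ _ _ z] by blast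
  then show ?thesis
    by (simp add: F_def f_def)
qed

theorem theorem6p6:
  shows "(\<forall>x::complex. norm x < ln 2 \<longrightarrow>
            (\<lambda>n. complex_of_real (e_coef n) * x ^ n) sums csqrt (exp x * (2 - exp x)))
       \<and> (\<forall>n::nat. n \<ge> 1 \<longrightarrow>
            d_coef (n + 1) = (-1)^n / real (n + 1) * det (E_mat n)
          \<and> e_coef n = (-1)^n * det (F_mat n))"
proof (intro conjI allI impI)
  fix x :: complex
  assume "norm x < ln 2"
  then show "(\<lambda>n. complex_of_real (e_coef n) * x ^ n) sums csqrt (exp x * (2 - exp x))"
    by (rule e_coef_sums)
next
  fix n :: nat
  have "det (E_mat n) = (-1) ^ n * (real (n + 1) * d_coef (n + 1))"
    unfolding E_mat_eq det_hessenberg_toeplitz_mat[OF e_fps_mult_deriv_d_fps e_fps_nth_0]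
    by (simp add: d_coef_eq_fps_nth)
  then show "d_coef (n + 1) = (-1) ^ n / real (n + 1) * det (E_mat n)"
    by (simp add: field_simps power_mult_distrib[symmetric])
  have "det (F_mat n) = (-1) ^ n * e_coef n"
    using det_hessenberg_toeplitz_mat[OF _ deriv_d_fps_nth_0] e_fps_mult_deriv_d_fps
    by (simp add: F_mat_eq e_coef_eq_fps_nth mult.commute)
  then show "e_coef n = (-1) ^ n * det (F_mat n)"
    by (simp add: power_mult_distrib[symmetric])
qed

end
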